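(* Let $P, N_{\mathrm{RF}}, N, M$ be positive integers with $N_{\mathrm{RF}}P \le N$, and let $\bar{\mathbf{A}}\in\mathbb{C}^{N_{\mathrm{RF}}P\times N}$ be a deterministic matrix all of whose entries satisfy $|\bar{\mathbf{A}}(i,j)|=\frac{1}{\sqrt{N}}$. Fix $n\in\{1,\dots,N\}$ and let $\Xi_n(m)\in\{1,\dots,N\}$, $m=1,\dots,M$, be the beam split pattern indices defined in the context. Let $\sigma^2>0$ and let $\mathbf{N}\in\mathbb{C}^{N_{\mathrm{RF}}P\times M}$ be a random matrix whose columns $\mathbf{N}(:,m)$, $m=1,\dots,M$, are mutually independent with $\mathbf{N}(:,m)\sim\mathcal{CN}(\mathbf{0}_{PN_{\mathrm{RF}}},\sigma^2\mathbf{I}_{PN_{\mathrm{RF}}})$. Let $\alpha>0$ satisfy $0.8\,\alpha^{-1/2}e^{-\alpha/2}\le 1$, set $\gamma=\sigma^2\alpha$, and define the event $$\mathcal{D}=\left\{\left|\bar{\mathbf{A}}^{H}(:,\Xi_n(m))\,\mathbf{N}(:,m)\right|^2\le\gamma\ \text{ for all } m=1,2,\dots,M\right\},$$ where $\bar{\mathbf{A}}(:,k)$ denotes the $k$-th column of $\bar{\mathbf{A}}$. Then $$\Pr\{\mathcal{D}\}\ \ge\ \left(1-0.8\,\alpha^{-\frac{1}{2}}e^{-\frac{\alpha}{2}}\right)^{M}.$$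
   Context: Setting: a wideband OFDM system with $M$ subcarriers, central frequency $f_c>0$ and bandwidth $B>0$; the $m$-th subcarrier frequency is $f_m=f_c+\frac{B}{M}\left(m-1-\frac{M-1}{2}\right)$. The angle-domain samples are $\bar{\theta}_{k}=\frac{2k-N-1}{N}$, $k=1,\dots,N$. For $n\in\{1,\dots,N\}$, the beam split pattern is the index set $\Xi_n=\bigcup_{m=1}^{M}\{(\Xi_n(m),m)\}$ where $\Xi_n(m)=\arg\min_{n_1\in\{1,\dots,N\}}\left|\frac{f_m}{f_c}\bar{\theta}_n-\bar{\theta}_{n_1}\right|$ (with any fixed tie-breaking rule). $\mathcal{CN}(\mathbf{0},\sigma^2\mathbf{I})$ denotes the circularly symmetric complex Gaussian distribution; $(\cdot)^H$ is conjugate transpose. *)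

theory Defs
  imports "HOL-Probability.Probability"
begin

definition subcarrier_freq :: "real \<Rightarrow> real \<Rightarrow> nat \<Rightarrow> nat \<Rightarrow> real" where
  "subcarrier_freq fc B M m = fc + B / real M * (real m - 1 - (real M - 1) / 2)"

definition angle_sample :: "nat \<Rightarrow> nat \<Rightarrow> real" where
  "angle_sample N k = (2 * real k - real N - 1) / real N"

text \<open>Xi is a beam split pattern for index n: for every subcarrier m, Xi m is
  an arg-min (chosen by some fixed tie-breaking rule) over {1..N}.\<close>
definition is_beam_split_pattern ::
  "real \<Rightarrow> real \<Rightarrow> nat \<Rightarrow> nat \<Rightarrow> nat \<Rightarrow> (nat \<Rightarrow> nat) \<Rightarrow> bool" where
  "is_beam_split_pattern fc B M N n Xi \<longleftrightarrow>
     (\<forall>m\<in>{1..M}. Xi m \<in> {1..N} \<and>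
        (\<forall>n1\<in>{1..N}.
           \<bar>subcarrier_freq fc B M m / fc * angle_sample N n - angle_sample N (Xi m)\<bar>
           \<le> \<bar>subcarrier_freq fc B M m / fc * angle_sample N n - angle_sample N n1\<bar>))"

definition complex_gaussian :: "real \<Rightarrow> complex measure" where
  "complex_gaussian s =
     distr (density lborel (normal_density 0 (sqrt (s / 2)))
            \<Otimes>\<^sub>M density lborel (normal_density 0 (sqrt (s / 2))))
           borel (\<lambda>(x, y). Complex x y)"

definition cgauss_vec :: "nat \<Rightarrow> real \<Rightarrow> (nat \<Rightarrow> complex) measure" where
  "cgauss_vec L s = PiM {1..L} (\<lambda>_. complex_gaussian s)"

end

theory Submission
  imports Defs
begin

(* For a fixed subcarrier m the statistic is |c^H z|^2 with z ~ CN(0, sigma^2 I_L), L = N_RF P,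
   and |c_i|^2 = 1/N. Complex Gaussians are stable under positive scaling and under adding an
   independent multiple of another one (a Gaussian convolution, computed by completing the square),
   so c^H z ~ CN(0, sigma^2 L/N) with L/N <= 1. The squared modulus of a CN(0, w) variable exceeds t
   with probability exp(-t/w); hence each event has probability at least 1 - exp(-alpha), and
   exp(-alpha) <= 0.8 alpha^(-1/2) exp(-alpha/2) since sqrt alpha exp(-alpha/2) <= exp(-1/2) < 0.8.
   The noise columns are independent, so these probabilities multiply. *)

lemma measure_eqI_borel_indicator:
  assumes "sets M = sets borel" "sets N = sets borel"
    and "\<And>A. A \<in> sets borel \<Longrightarrow> (\<integral>\<^sup>+z. indicator A z \<partial>M) = (\<integral>\<^sup>+z. indicator A z \<partial>N)"
  shows "M = N"
proof (rule measure_eqI)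
  fix A assume "A \<in> sets M"
  with assms show "emeasure M A = emeasure N A"
    by (metis nn_integral_indicator)
qed (use assms in simp)

lemma nn_integral_lborel_affine2:
  fixes F :: "real \<Rightarrow> real \<Rightarrow> ennreal" and c :: real
  assumes [measurable]: "case_prod F \<in> borel_measurable (borel \<Otimes>\<^sub>M borel)" and "c \<noteq> 0"
  shows "(\<integral>\<^sup>+x. \<integral>\<^sup>+y. F x y \<partial>lborel \<partial>lborel) =
    (\<integral>\<^sup>+x. \<integral>\<^sup>+y. ennreal (c * c) * F (s + c * x) (t + c * y) \<partial>lborel \<partial>lborel)"
proof -
  have "(\<integral>\<^sup>+x. \<integral>\<^sup>+y. F x y \<partial>lborel \<partial>lborel) =
      ennreal \<bar>c\<bar> * (\<integral>\<^sup>+x. \<integral>\<^sup>+y. F (s + c * x) y \<partial>lborel \<partial>lborel)"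
    using \<open>c \<noteq> 0\<close> by (subst nn_integral_real_affine[where c=c and t=s]) auto
  also have "\<dots> = ennreal \<bar>c\<bar> *
      (\<integral>\<^sup>+x. ennreal \<bar>c\<bar> * \<integral>\<^sup>+y. F (s + c * x) (t + c * y) \<partial>lborel \<partial>lborel)"
    using \<open>c \<noteq> 0\<close> by (subst nn_integral_real_affine[where c=c and t=t]) auto
  also have "\<dots> = (\<integral>\<^sup>+x. \<integral>\<^sup>+y. ennreal \<bar>c\<bar> * (ennreal \<bar>c\<bar> * F (s + c * x) (t + c * y)) \<partial>lborel \<partial>lborel)"
    by (simp add: nn_integral_cmult[symmetric])
  also have "\<dots> = (\<integral>\<^sup>+x. \<integral>\<^sup>+y. ennreal (c * c) * F (s + c * x) (t + c * y) \<partial>lborel \<partial>lborel)"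
    by (simp add: mult.assoc[symmetric] ennreal_mult'[symmetric] abs_mult_self_eq)
  finally show ?thesis .
qed

lemma nn_integral_lborel_swap_pairs:
  fixes F :: "real \<Rightarrow> real \<Rightarrow> real \<Rightarrow> real \<Rightarrow> ennreal"
  assumes [measurable]:
    "(\<lambda>(x, y, u, w). F x y u w) \<in> borel_measurable (borel \<Otimes>\<^sub>M borel \<Otimes>\<^sub>M borel \<Otimes>\<^sub>M borel)"
  shows "(\<integral>\<^sup>+x. \<integral>\<^sup>+y. \<integral>\<^sup>+u. \<integral>\<^sup>+w. F x y u w \<partial>lborel \<partial>lborel \<partial>lborel \<partial>lborel) =
    (\<integral>\<^sup>+u. \<integral>\<^sup>+w. \<integral>\<^sup>+x. \<integral>\<^sup>+y. F x y u w \<partial>lborel \<partial>lborel \<partial>lborel \<partial>lborel)"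
proof -
  \<comment> \<open>joint measurability of F in the form the measurability prover can instantiate\<close>
  have [measurable (raw)]: "(\<lambda>\<omega>. F (f \<omega>) (g \<omega>) (h \<omega>) (k \<omega>)) \<in> borel_measurable M"
    if [measurable]: "f \<in> borel_measurable M" "g \<in> borel_measurable M" "h \<in> borel_measurable M"
      "k \<in> borel_measurable M" for M f g h k
  proof -
    have "(\<lambda>\<omega>. F (f \<omega>) (g \<omega>) (h \<omega>) (k \<omega>)) =
        (\<lambda>(x, y, u, w). F x y u w) \<circ> (\<lambda>\<omega>. (f \<omega>, g \<omega>, h \<omega>, k \<omega>))"
      by auto
    then show ?thesis
      by (simp only:) (rule measurable_comp[OF _ assms], measurable)
  qed
  have "(\<integral>\<^sup>+x. \<integral>\<^sup>+y. \<integral>\<^sup>+u. \<integral>\<^sup>+w. F x y u w \<partial>lborel \<partial>lborel \<partial>lborel \<partial>lborel) =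
      (\<integral>\<^sup>+x. \<integral>\<^sup>+u. \<integral>\<^sup>+y. \<integral>\<^sup>+w. F x y u w \<partial>lborel \<partial>lborel \<partial>lborel \<partial>lborel)"
    by (rule nn_integral_cong, rule lborel_pair.Fubini') measurable
  also have "\<dots> = (\<integral>\<^sup>+x. \<integral>\<^sup>+u. \<integral>\<^sup>+w. \<integral>\<^sup>+y. F x y u w \<partial>lborel \<partial>lborel \<partial>lborel \<partial>lborel)"
    by (rule nn_integral_cong, rule nn_integral_cong, rule lborel_pair.Fubini') measurable
  also have "\<dots> = (\<integral>\<^sup>+u. \<integral>\<^sup>+x. \<integral>\<^sup>+w. \<integral>\<^sup>+y. F x y u w \<partial>lborel \<partial>lborel \<partial>lborel \<partial>lborel)"
    by (rule lborel_pair.Fubini') measurable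
  also have "\<dots> = (\<integral>\<^sup>+u. \<integral>\<^sup>+w. \<integral>\<^sup>+x. \<integral>\<^sup>+y. F x y u w \<partial>lborel \<partial>lborel \<partial>lborel \<partial>lborel)"
    by (rule nn_integral_cong, rule lborel_pair.Fubini') measurable
  finally show ?thesis .
qed

lemma nn_integral_lborel_slope_subst:
  fixes G :: "real \<Rightarrow> real \<Rightarrow> ennreal"
  assumes [measurable]: "case_prod G \<in> borel_measurable (borel \<Otimes>\<^sub>M borel)"
  shows "(\<integral>\<^sup>+x. \<integral>\<^sup>+y. G x y \<partial>lborel \<partial>lborel) =
    (\<integral>\<^sup>+s. \<integral>\<^sup>+x. ennreal \<bar>x\<bar> * G x (x * s) \<partial>lborel \<partial>lborel)"
proof -
  have "(\<integral>\<^sup>+x. \<integral>\<^sup>+y. G x y \<partial>lborel \<partial>lborel) =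
      (\<integral>\<^sup>+x. \<integral>\<^sup>+s. ennreal \<bar>x\<bar> * G x (0 + x * s) \<partial>lborel \<partial>lborel)"
  proof (rule nn_integral_cong_AE, rule eventually_mono[OF AE_lborel_singleton[of 0]])
    fix x :: real assume "x \<noteq> 0"
    then show "(\<integral>\<^sup>+y. G x y \<partial>lborel) = (\<integral>\<^sup>+s. ennreal \<bar>x\<bar> * G x (0 + x * s) \<partial>lborel)"
      by (subst nn_integral_real_affine[where c=x and t=0]) (auto simp: nn_integral_cmult)
  qed
  also have "\<dots> = (\<integral>\<^sup>+s. \<integral>\<^sup>+x. ennreal \<bar>x\<bar> * G x (0 + x * s) \<partial>lborel \<partial>lborel)"
    by (rule lborel_pair.Fubini'[symmetric]) measurable
  finally show ?thesis
    by simp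
qed

lemma nn_integral_lborel_even:
  fixes h :: "real \<Rightarrow> ennreal"
  assumes [measurable]: "h \<in> borel_measurable borel" and even: "\<And>x. h (- x) = h x"
  shows "(\<integral>\<^sup>+x. h x \<partial>lborel) = 2 * (\<integral>\<^sup>+x. h x * indicator {0..} x \<partial>lborel)"
proof -
  have "(\<integral>\<^sup>+x. h x \<partial>lborel) = (\<integral>\<^sup>+x. h x * indicator {0..} x + h x * indicator {..<0} x \<partial>lborel)"
    by (rule nn_integral_cong) (auto split: split_indicator)
  also have "\<dots> = (\<integral>\<^sup>+x. h x * indicator {0..} x \<partial>lborel) + (\<integral>\<^sup>+x. h x * indicator {..<0} x \<partial>lborel)"
    by (rule nn_integral_add) auto
  also have "(\<integral>\<^sup>+x. h x * indicator {..<0} x \<partial>lborel) =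
      (\<integral>\<^sup>+x. h (0 + -1 * x) * indicator {..<0} (0 + -1 * x) \<partial>lborel)"
    by (subst nn_integral_real_affine[where c="-1" and t=0]) auto
  also have "\<dots> = (\<integral>\<^sup>+x. h x * indicator {0<..} x \<partial>lborel)"
    by (rule nn_integral_cong) (auto simp: even split: split_indicator)
  also have "\<dots> = (\<integral>\<^sup>+x. h x * indicator {0..} x \<partial>lborel)"
    by (intro nn_integral_cong_AE eventually_mono[OF AE_lborel_singleton[of 0]])
      (auto split: split_indicator)
  finally show ?thesis by (simp add: mult_2)
qed

lemma nn_integral_lborel_inverse_one_plus_square:
  "(\<integral>\<^sup>+s. ennreal (1 / (1 + s\<^sup>2)) \<partial>lborel) = ennreal pi"
proof -
  have "(\<integral>\<^sup>+s. ennreal (1 / (1 + s\<^sup>2)) \<partial>lborel) =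
      2 * (\<integral>\<^sup>+s. ennreal (1 / (1 + s\<^sup>2)) * indicator {0..} s \<partial>lborel)"
    by (rule nn_integral_lborel_even) auto
  also have "(\<integral>\<^sup>+s. ennreal (1 / (1 + s\<^sup>2)) * indicator {0..} s \<partial>lborel) = ennreal (pi / 2 - arctan 0)"
  proof (rule nn_integral_FTC_atLeast)
    show "(arctan \<longlongrightarrow> pi / 2) at_top"
      by (rule tendsto_arctan_at_top)
  qed (auto intro!: derivative_eq_intros simp: add_nonneg_eq_0_iff field_simps power2_eq_square)
  finally show ?thesis
    using ennreal_mult[of 2 "pi / 2"] by simp
qed

lemma nn_integral_lborel_abs_mult_gaussian_tail:
  fixes k r :: real
  assumes k: "k > 0" and r: "r \<ge> 0"
  shows "(\<integral>\<^sup>+x. ennreal (\<bar>x\<bar> * exp (- k * x\<^sup>2)) * indicator {x. r < x\<^sup>2} x \<partial>lborel) =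
    ennreal (exp (- k * r) / k)"
proof -
  have "(\<integral>\<^sup>+x. ennreal (\<bar>x\<bar> * exp (- k * x\<^sup>2)) * indicator {x. r < x\<^sup>2} x \<partial>lborel) =
      2 * (\<integral>\<^sup>+x. ennreal (\<bar>x\<bar> * exp (- k * x\<^sup>2)) * indicator {x. r < x\<^sup>2} x * indicator {0..} x \<partial>lborel)"
    by (rule nn_integral_lborel_even) (auto split: split_indicator)
  also have "(\<integral>\<^sup>+x. ennreal (\<bar>x\<bar> * exp (- k * x\<^sup>2)) * indicator {x. r < x\<^sup>2} x * indicator {0..} x \<partial>lborel) =
      (\<integral>\<^sup>+x. ennreal (x * exp (- k * x\<^sup>2)) * indicator {sqrt r..} x \<partial>lborel)"
  proof (intro nn_integral_cong_AE eventually_mono[OF AE_lborel_singleton[of "sqrt r"]] impI)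
    fix x :: real assume "x \<noteq> sqrt r"
    have "0 \<le> x \<and> r < x\<^sup>2 \<longleftrightarrow> sqrt r \<le> x"
    proof
      assume "0 \<le> x \<and> r < x\<^sup>2"
      then show "sqrt r \<le> x"
        using real_sqrt_less_mono[of r "x\<^sup>2"] by simp
    next
      assume "sqrt r \<le> x"
      with \<open>x \<noteq> sqrt r\<close> have "sqrt r < x"
        by simp
      then have "(sqrt r)\<^sup>2 < x\<^sup>2"
        using r by (intro power_strict_mono) auto
      moreover have "0 \<le> x"
        using real_sqrt_ge_zero[OF r] \<open>sqrt r < x\<close> by linarith
      ultimately show "0 \<le> x \<and> r < x\<^sup>2"
        using r by simp
    qed
    then show "ennreal (\<bar>x\<bar> * exp (- k * x\<^sup>2)) * indicator {x. r < x\<^sup>2} x * indicator {0..} x =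
        ennreal (x * exp (- k * x\<^sup>2)) * indicator {sqrt r..} x"
      by (auto split: split_indicator)
  qed
  also have "\<dots> = ennreal (0 - (- exp (- k * (sqrt r)\<^sup>2) / (2 * k)))"
  proof (rule nn_integral_FTC_atLeast)
    have "((\<lambda>x. - exp (- k * x\<^sup>2) / (2 * k)) \<longlongrightarrow> - 0 / (2 * k)) at_top"
      using k by (intro tendsto_intros filterlim_compose[OF exp_at_bot]
          filterlim_tendsto_neg_mult_at_bot[OF tendsto_const] filterlim_pow_at_top filterlim_ident) auto
    then show "((\<lambda>x. - exp (- k * x\<^sup>2) / (2 * k)) \<longlongrightarrow> 0) at_top"
      by simp
    fix x :: real assume "sqrt r \<le> x"
    then have "0 \<le> x"
      using real_sqrt_ge_zero[OF r] by linarith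
    then show "0 \<le> x * exp (- k * x\<^sup>2)"
      by simp
    show "((\<lambda>x. - exp (- k * x\<^sup>2) / (2 * k)) has_real_derivative x * exp (- k * x\<^sup>2)) (at x)"
      using k by (auto intro!: derivative_eq_intros simp: field_simps)
  qed auto
  also have "2 * ennreal (0 - (- exp (- k * (sqrt r)\<^sup>2) / (2 * k))) = ennreal (exp (- k * r) / k)"
    using k r ennreal_mult[of 2 "exp (- (k * r)) / (2 * k)"] by simp
  finally show ?thesis .
qed

lemma sqrt_mult_exp_neg_half_le:
  fixes \<alpha> :: real
  assumes "\<alpha> \<ge> 0"
  shows "sqrt \<alpha> * exp (- \<alpha> / 2) \<le> 0.8"
proof (rule power2_le_imp_le)
  have "\<alpha> \<le> exp (\<alpha> - 1)"
    using exp_ge_add_one_self[of "\<alpha> - 1"] by simp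
  also have "\<dots> = exp \<alpha> / exp 1"
    by (simp add: exp_diff)
  also have "\<dots> \<le> exp \<alpha> / 2"
    using exp_ge_add_one_self[of 1] by (intro divide_left_mono) auto
  finally have "\<alpha> * exp (- \<alpha>) \<le> exp \<alpha> / 2 * exp (- \<alpha>)"
    by (intro mult_right_mono) auto
  also have "\<dots> = 1 / 2"
    by (simp add: exp_minus field_simps)
  finally have "\<alpha> * exp (- \<alpha>) \<le> 1 / 2" .
  moreover have "(sqrt \<alpha> * exp (- \<alpha> / 2))\<^sup>2 = \<alpha> * exp (- \<alpha>)"
    using assms by (simp add: power_mult_distrib exp_double[symmetric] power2_eq_square[of "exp _"]
        exp_add[symmetric])
  ultimately show "(sqrt \<alpha> * exp (- \<alpha> / 2))\<^sup>2 \<le> 0.8\<^sup>2"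
    by (simp add: power2_eq_square)
qed simp

lemma (in prob_space) prob_indep_vars_all_in_ge:
  assumes indep: "indep_vars M' X I" and "finite I"
    and sets: "\<And>i. i \<in> I \<Longrightarrow> B i \<in> sets (M' i)"
    and ge: "\<And>i. i \<in> I \<Longrightarrow> measure (distr M (M' i) (X i)) (B i) \<ge> p" and "p \<ge> 0"
  shows "prob {\<omega> \<in> space M. \<forall>i\<in>I. X i \<omega> \<in> B i} \<ge> p ^ card I"
proof (cases "I = {}")
  case False
  have "{\<omega> \<in> space M. \<forall>i\<in>I. X i \<omega> \<in> B i} = (\<Inter>i\<in>I. X i -` B i \<inter> space M)"
    using False by auto
  then have "prob {\<omega> \<in> space M. \<forall>i\<in>I. X i \<omega> \<in> B i} = (\<Prod>i\<in>I. prob (X i -` B i \<inter> space M))"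
    using indep_varsD[OF indep False \<open>finite I\<close> order_refl sets] by simp
  also have "\<dots> = (\<Prod>i\<in>I. measure (distr M (M' i) (X i)) (B i))"
    using indep sets unfolding indep_vars_def by (intro prod.cong refl measure_distr[symmetric]) auto
  also have "\<dots> \<ge> (\<Prod>i\<in>I. p)"
    using ge \<open>p \<ge> 0\<close> by (intro prod_mono) auto
  finally show ?thesis
    by simp
qed (simp add: prob_space)

lemma borel_measurable_Complex[measurable (raw)]:
  "f \<in> borel_measurable M \<Longrightarrow> g \<in> borel_measurable M \<Longrightarrow>
    (\<lambda>x. Complex (f x) (g x)) \<in> borel_measurable M"
  by (simp add: Complex_eq)

definition cgauss_part_density :: "real \<Rightarrow> real \<Rightarrow> real" where
  "cgauss_part_density v x = normal_density 0 (sqrt (v / 2)) x"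

lemma borel_measurable_cgauss_part_density[measurable]:
  "cgauss_part_density v \<in> borel_measurable borel"
  unfolding cgauss_part_density_def[abs_def] by measurable

lemma cgauss_part_density_nonneg[simp]: "0 \<le> cgauss_part_density v x"
  by (simp add: cgauss_part_density_def)

lemma cgauss_part_density_eq:
  "v > 0 \<Longrightarrow> cgauss_part_density v x = exp (- x\<^sup>2 / v) / sqrt (pi * v)"
  by (simp add: cgauss_part_density_def normal_density_def)

lemma nn_integral_cgauss_part_density_shift:
  assumes "v > 0"
  shows "(\<integral>\<^sup>+x. ennreal (cgauss_part_density v (x - \<mu>)) \<partial>lborel) = 1"
proof -
  have "cgauss_part_density v (x - \<mu>) = normal_density \<mu> (sqrt (v / 2)) x" for x
    by (simp add: cgauss_part_density_def normal_density_def)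
  then show ?thesis
    using assms by (simp add: nn_integral_eq_integral integral_normal_density)
qed

lemma cgauss_part_density_scale:
  "v > 0 \<Longrightarrow> r > 0 \<Longrightarrow> r * cgauss_part_density (r\<^sup>2 * v) (r * x) = cgauss_part_density v x"
  by (simp add: cgauss_part_density_eq real_sqrt_mult power_mult_distrib)

lemma cgauss_part_density_complete_square:
  fixes a b p q v1 v2 x y :: real
  assumes a: "a > 0" and b: "b > 0"
  \<comment> \<open>for independent u ~ CN(0, a) and z = x + i y ~ CN(0, b): a' is the variance of u + c z
      (c = p + i q), and \<tau>, (\<mu>1, \<mu>2) are the conditional variance and mean of z given
      u + c z = v1 + i v2\<close>
  defines "a' \<equiv> a + (p\<^sup>2 + q\<^sup>2) * b"
  defines "\<tau> \<equiv> a * b / a'"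
  defines "\<mu>1 \<equiv> \<tau> * (p * v1 + q * v2) / a" and "\<mu>2 \<equiv> \<tau> * (p * v2 - q * v1) / a"
  shows "cgauss_part_density b x * cgauss_part_density b y *
      cgauss_part_density a (v1 - (p * x - q * y)) * cgauss_part_density a (v2 - (q * x + p * y)) =
    cgauss_part_density a' v1 * cgauss_part_density a' v2 *
      (cgauss_part_density \<tau> (x - \<mu>1) * cgauss_part_density \<tau> (y - \<mu>2))"
proof -
  have a': "a' > 0" unfolding a'_def using a b by (intro add_pos_nonneg) auto
  have \<tau>: "\<tau> > 0" unfolding \<tau>_def using a b a' by simp
  have exponent: "- x\<^sup>2 / b + - y\<^sup>2 / b + - (v1 - (p * x - q * y))\<^sup>2 / a + - (v2 - (q * x + p * y))\<^sup>2 / a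
     = - v1\<^sup>2 / a' + - v2\<^sup>2 / a' + (- (x - \<mu>1)\<^sup>2 / \<tau> + - (y - \<mu>2)\<^sup>2 / \<tau>)"
    using a b a' \<tau> unfolding \<mu>1_def \<mu>2_def \<tau>_def
    by (simp add: field_simps, unfold a'_def, simp add: power2_eq_square, simp add: algebra_simps)
  have normalisation: "pi * b * (pi * a) = pi * a' * (pi * \<tau>)"
    using a' unfolding \<tau>_def by (simp add: field_simps)
  have frac: "\<And>A B C D s1 s2 :: real. A / s1 * (B / s1) * (C / s2) * (D / s2) = A * B * C * D / (s1 * s1 * (s2 * s2))"
    by simp
  have lhs: "cgauss_part_density b x * cgauss_part_density b y *
      cgauss_part_density a (v1 - (p * x - q * y)) * cgauss_part_density a (v2 - (q * x + p * y)) =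
    exp (- x\<^sup>2 / b + - y\<^sup>2 / b + - (v1 - (p * x - q * y))\<^sup>2 / a + - (v2 - (q * x + p * y))\<^sup>2 / a) /
      (pi * b * (pi * a))"
    unfolding cgauss_part_density_eq[OF a] cgauss_part_density_eq[OF b] exp_add frac using a b by simp
  have rhs: "cgauss_part_density a' v1 * cgauss_part_density a' v2 *
      (cgauss_part_density \<tau> (x - \<mu>1) * cgauss_part_density \<tau> (y - \<mu>2)) =
    exp (- v1\<^sup>2 / a' + - v2\<^sup>2 / a' + (- (x - \<mu>1)\<^sup>2 / \<tau> + - (y - \<mu>2)\<^sup>2 / \<tau>)) /
      (pi * a' * (pi * \<tau>))"
    unfolding cgauss_part_density_eq[OF a'] cgauss_part_density_eq[OF \<tau>] exp_add
      mult.assoc[symmetric] frac using a' \<tau> by simp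
  show ?thesis
    unfolding lhs rhs exponent normalisation ..
qed

lemma nn_integral_cgauss_part_density_convolution:
  fixes a b p q v1 v2 :: real
  assumes a: "a > 0" and b: "b > 0"
  shows "(\<integral>\<^sup>+x. \<integral>\<^sup>+y. ennreal (cgauss_part_density b x * cgauss_part_density b y *
      cgauss_part_density a (v1 - (p * x - q * y)) * cgauss_part_density a (v2 - (q * x + p * y)))
      \<partial>lborel \<partial>lborel) =
    ennreal (cgauss_part_density (a + (p\<^sup>2 + q\<^sup>2) * b) v1 * cgauss_part_density (a + (p\<^sup>2 + q\<^sup>2) * b) v2)"
proof -
  define a' where "a' = a + (p\<^sup>2 + q\<^sup>2) * b"
  define \<tau> where "\<tau> = a * b / a'"
  define \<mu>1 where "\<mu>1 = \<tau> * (p * v1 + q * v2) / a"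
  define \<mu>2 where "\<mu>2 = \<tau> * (p * v2 - q * v1) / a"
  have "a' > 0" unfolding a'_def using a b by (intro add_pos_nonneg) auto
  then have "\<tau> > 0" unfolding \<tau>_def using a b by simp
  have "(\<integral>\<^sup>+x. \<integral>\<^sup>+y. ennreal (cgauss_part_density b x * cgauss_part_density b y *
      cgauss_part_density a (v1 - (p * x - q * y)) * cgauss_part_density a (v2 - (q * x + p * y)))
      \<partial>lborel \<partial>lborel) =
    (\<integral>\<^sup>+x. \<integral>\<^sup>+y. ennreal (cgauss_part_density a' v1 * cgauss_part_density a' v2) *
      (ennreal (cgauss_part_density \<tau> (x - \<mu>1)) * ennreal (cgauss_part_density \<tau> (y - \<mu>2)))
      \<partial>lborel \<partial>lborel)"
    unfolding a'_def \<tau>_def \<mu>1_def \<mu>2_def cgauss_part_density_complete_square[OF a b]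
    by (simp add: ennreal_mult[symmetric])
  also have "\<dots> = ennreal (cgauss_part_density a' v1 * cgauss_part_density a' v2) *
      ((\<integral>\<^sup>+x. ennreal (cgauss_part_density \<tau> (x - \<mu>1)) \<partial>lborel) *
       (\<integral>\<^sup>+y. ennreal (cgauss_part_density \<tau> (y - \<mu>2)) \<partial>lborel))"
    by (simp add: nn_integral_cmult nn_integral_multc mult.assoc)
  also have "\<dots> = ennreal (cgauss_part_density a' v1 * cgauss_part_density a' v2)"
    using \<open>\<tau> > 0\<close> by (simp add: nn_integral_cgauss_part_density_shift)
  finally show ?thesis unfolding a'_def .
qed

lemma sets_complex_gaussian[measurable_cong, simp]: "sets (complex_gaussian v) = sets borel"
  by (simp add: complex_gaussian_def)

lemma space_complex_gaussian[simp]: "space (complex_gaussian v) = UNIV"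
  by (simp add: complex_gaussian_def)

lemma prob_space_complex_gaussian: "v > 0 \<Longrightarrow> prob_space (complex_gaussian v)"
  unfolding complex_gaussian_def
  by (intro prob_space.prob_space_distr prob_space_pair prob_space_normal_density) auto

lemma nn_integral_complex_gaussian:
  assumes [measurable]: "f \<in> borel_measurable borel" and "v > 0"
  shows "(\<integral>\<^sup>+z. f z \<partial>complex_gaussian v) =
    (\<integral>\<^sup>+x. \<integral>\<^sup>+y. ennreal (cgauss_part_density v x * cgauss_part_density v y) * f (Complex x y)
      \<partial>lborel \<partial>lborel)"
proof -
  let ?N = "density lborel (cgauss_part_density v)"
  interpret N: prob_space ?N
    unfolding cgauss_part_density_def[abs_def] using \<open>v > 0\<close> by (intro prob_space_normal_density) auto
  have "(\<integral>\<^sup>+z. f z \<partial>complex_gaussian v) = (\<integral>\<^sup>+p. f (Complex (fst p) (snd p)) \<partial>(?N \<Otimes>\<^sub>M ?N))"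
    unfolding complex_gaussian_def cgauss_part_density_def[symmetric, abs_def]
    by (subst nn_integral_distr) (auto simp: case_prod_beta)
  also have "\<dots> = (\<integral>\<^sup>+x. \<integral>\<^sup>+y. f (Complex x y) \<partial>?N \<partial>?N)"
    by (subst N.nn_integral_fst[symmetric]) auto
  also have "\<dots> = (\<integral>\<^sup>+x. \<integral>\<^sup>+y. ennreal (cgauss_part_density v x * cgauss_part_density v y) *
      f (Complex x y) \<partial>lborel \<partial>lborel)"
    by (simp add: nn_integral_density nn_integral_cmult[symmetric] ennreal_mult mult.assoc)
  finally show ?thesis .
qed

lemma distr_complex_gaussian_scale:
  assumes v: "v > 0" and r: "r > 0"
  shows "distr (complex_gaussian v) borel (\<lambda>z. of_real r * z) = complex_gaussian (r\<^sup>2 * v)"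
proof (rule measure_eqI_borel_indicator)
  fix A :: "complex set" assume [measurable]: "A \<in> sets borel"
  let ?g = "cgauss_part_density (r\<^sup>2 * v)"
  have "(\<integral>\<^sup>+z. indicator A z \<partial>complex_gaussian (r\<^sup>2 * v)) =
      (\<integral>\<^sup>+x. \<integral>\<^sup>+y. ennreal (?g x * ?g y) * indicator A (Complex x y) \<partial>lborel \<partial>lborel)"
    using v r by (intro nn_integral_complex_gaussian) auto
  also have "\<dots> = (\<integral>\<^sup>+x. \<integral>\<^sup>+y. ennreal (r * r) * (ennreal (?g (r * x) * ?g (r * y)) *
      indicator A (Complex (r * x) (r * y))) \<partial>lborel \<partial>lborel)"
    using r by (subst nn_integral_lborel_affine2[where c=r and s=0 and t=0]) auto
  also have "\<dots> = (\<integral>\<^sup>+x. \<integral>\<^sup>+y. ennreal (cgauss_part_density v x * cgauss_part_density v y) *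
      indicator A (of_real r * Complex x y) \<partial>lborel \<partial>lborel)"
  proof -
    have "r * r * (?g (r * x) * ?g (r * y)) = cgauss_part_density v x * cgauss_part_density v y" for x y
    proof -
      have "r * r * (?g (r * x) * ?g (r * y)) = (r * ?g (r * x)) * (r * ?g (r * y))"
        by (simp only: ac_simps)
      then show ?thesis
        by (simp only: cgauss_part_density_scale[OF v r])
    qed
    moreover have "Complex (r * x) (r * y) = of_real r * Complex x y" for x y
      by (simp add: complex_eq_iff)
    ultimately show ?thesis
      using r by (simp add: ennreal_mult[symmetric] mult.assoc[symmetric])
  qed
  also have "\<dots> = (\<integral>\<^sup>+z. indicator A (of_real r * z) \<partial>complex_gaussian v)"
    using v by (intro nn_integral_complex_gaussian[symmetric]) auto
  finally show "(\<integral>\<^sup>+z. indicator A z \<partial>distr (complex_gaussian v) borel (\<lambda>z. of_real r * z)) =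
      (\<integral>\<^sup>+z. indicator A z \<partial>complex_gaussian (r\<^sup>2 * v))"
    by (subst nn_integral_distr) auto
qed auto

lemma nn_integral_complex_gaussian_shift:
  assumes [measurable]: "f \<in> borel_measurable borel" and "a > 0"
  shows "(\<integral>\<^sup>+z. f (z + w) \<partial>complex_gaussian a) =
    (\<integral>\<^sup>+v1. \<integral>\<^sup>+v2. ennreal (cgauss_part_density a (v1 - Re w) * cgauss_part_density a (v2 - Im w)) *
      f (Complex v1 v2) \<partial>lborel \<partial>lborel)"
proof -
  have "(\<integral>\<^sup>+z. f (z + w) \<partial>complex_gaussian a) =
      (\<integral>\<^sup>+x. \<integral>\<^sup>+y. ennreal (cgauss_part_density a x * cgauss_part_density a y) * f (Complex x y + w)
        \<partial>lborel \<partial>lborel)"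
    using \<open>a > 0\<close> by (intro nn_integral_complex_gaussian) auto
  also have "\<dots> = (\<integral>\<^sup>+v1. \<integral>\<^sup>+v2. ennreal (cgauss_part_density a (v1 - Re w) * cgauss_part_density a (v2 - Im w)) *
      f (Complex v1 v2) \<partial>lborel \<partial>lborel)"
  proof -
    have "Complex (Re w + x) (Im w + y) = Complex x y + w" for x y
      by (simp add: complex_eq_iff)
    then show ?thesis
      by (subst (2) nn_integral_lborel_affine2[where c=1 and s="Re w" and t="Im w"]) auto
  qed
  finally show ?thesis .
qed

lemma distr_complex_gaussian_add:
  assumes a: "a > 0" and b: "b > 0"
  shows "distr (complex_gaussian a \<Otimes>\<^sub>M complex_gaussian b) borel (\<lambda>(u, z). u + c * z) =
    complex_gaussian (a + (cmod c)\<^sup>2 * b)"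
proof (rule measure_eqI_borel_indicator)
  interpret A: prob_space "complex_gaussian a" by (rule prob_space_complex_gaussian[OF a])
  interpret B: prob_space "complex_gaussian b" by (rule prob_space_complex_gaussian[OF b])
  interpret AB: pair_prob_space "complex_gaussian a" "complex_gaussian b" ..
  fix S :: "complex set" assume [measurable]: "S \<in> sets borel"
  let ?ga = "cgauss_part_density a" and ?gb = "cgauss_part_density b"
  define p where "p = Re c"
  define q where "q = Im c"
  let ?G = "\<lambda>x y v1 v2. ?gb x * ?gb y * ?ga (v1 - (p * x - q * y)) * ?ga (v2 - (q * x + p * y))"
  have "(\<integral>\<^sup>+z. indicator S z \<partial>distr (complex_gaussian a \<Otimes>\<^sub>M complex_gaussian b) borel (\<lambda>(u, z). u + c * z))
     = (\<integral>\<^sup>+z. \<integral>\<^sup>+u. indicator S (u + c * z) \<partial>complex_gaussian a \<partial>complex_gaussian b)"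
    by (subst nn_integral_distr) (auto simp: case_prod_beta AB.nn_integral_snd[symmetric])
  also have "\<dots> = (\<integral>\<^sup>+z. \<integral>\<^sup>+v1. \<integral>\<^sup>+v2. ennreal (?ga (v1 - Re (c * z)) * ?ga (v2 - Im (c * z))) *
      indicator S (Complex v1 v2) \<partial>lborel \<partial>lborel \<partial>complex_gaussian b)"
    using a by (intro nn_integral_cong nn_integral_complex_gaussian_shift) auto
  also have "\<dots> = (\<integral>\<^sup>+x. \<integral>\<^sup>+y. ennreal (?gb x * ?gb y) *
      (\<integral>\<^sup>+v1. \<integral>\<^sup>+v2. ennreal (?ga (v1 - (p * x - q * y)) * ?ga (v2 - (q * x + p * y))) *
        indicator S (Complex v1 v2) \<partial>lborel \<partial>lborel) \<partial>lborel \<partial>lborel)"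
    using b by (subst nn_integral_complex_gaussian) (auto simp: p_def q_def ac_simps)
  also have "\<dots> = (\<integral>\<^sup>+x. \<integral>\<^sup>+y. \<integral>\<^sup>+v1. \<integral>\<^sup>+v2. ennreal (?G x y v1 v2) * indicator S (Complex v1 v2)
      \<partial>lborel \<partial>lborel \<partial>lborel \<partial>lborel)"
    by (auto intro!: nn_integral_cong simp: nn_integral_cmult[symmetric] ennreal_mult mult.assoc)
  also have "\<dots> = (\<integral>\<^sup>+v1. \<integral>\<^sup>+v2. \<integral>\<^sup>+x. \<integral>\<^sup>+y. ennreal (?G x y v1 v2) * indicator S (Complex v1 v2)
      \<partial>lborel \<partial>lborel \<partial>lborel \<partial>lborel)"
    by (rule nn_integral_lborel_swap_pairs) measurable
  also have "\<dots> = (\<integral>\<^sup>+v1. \<integral>\<^sup>+v2. (\<integral>\<^sup>+x. \<integral>\<^sup>+y. ennreal (?G x y v1 v2) \<partial>lborel \<partial>lborel) *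
      indicator S (Complex v1 v2) \<partial>lborel \<partial>lborel)"
    by (auto intro!: nn_integral_cong simp: nn_integral_multc[symmetric])
  also have "\<dots> = (\<integral>\<^sup>+v1. \<integral>\<^sup>+v2. ennreal (cgauss_part_density (a + (cmod c)\<^sup>2 * b) v1 *
      cgauss_part_density (a + (cmod c)\<^sup>2 * b) v2) * indicator S (Complex v1 v2) \<partial>lborel \<partial>lborel)"
    by (simp add: nn_integral_cgauss_part_density_convolution[OF a b] p_def q_def cmod_power2)
  also have "\<dots> = (\<integral>\<^sup>+z. indicator S z \<partial>complex_gaussian (a + (cmod c)\<^sup>2 * b))"
    using a b by (intro nn_integral_complex_gaussian[symmetric] add_pos_nonneg) auto
  finally show "(\<integral>\<^sup>+z. indicator S z \<partial>distr (complex_gaussian a \<Otimes>\<^sub>M complex_gaussian b) borel (\<lambda>(u, z). u + c * z))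
      = (\<integral>\<^sup>+z. indicator S z \<partial>complex_gaussian (a + (cmod c)\<^sup>2 * b))" .
qed auto

lemma (in prob_space) distr_add_indep_complex_gaussian:
  assumes indep: "indep_var borel X borel Y"
    and X: "distr M borel X = complex_gaussian a" and Y: "distr M borel Y = complex_gaussian b"
    and "a > 0" "b > 0"
  shows "distr M borel (\<lambda>\<omega>. X \<omega> + c * Y \<omega>) = complex_gaussian (a + (cmod c)\<^sup>2 * b)"
proof -
  have [measurable]: "X \<in> borel_measurable M" "Y \<in> borel_measurable M"
    using indep_var_rv1[OF indep] indep_var_rv2[OF indep] by auto
  have "distr M borel (\<lambda>\<omega>. X \<omega> + c * Y \<omega>) =
      distr (distr M (borel \<Otimes>\<^sub>M borel) (\<lambda>\<omega>. (X \<omega>, Y \<omega>))) borel (\<lambda>(u, z). u + c * z)"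
    by (subst distr_distr) (auto simp: comp_def)
  also have "distr M (borel \<Otimes>\<^sub>M borel) (\<lambda>\<omega>. (X \<omega>, Y \<omega>)) = complex_gaussian a \<Otimes>\<^sub>M complex_gaussian b"
    using indep unfolding indep_var_distribution_eq X Y by simp
  finally show ?thesis
    using distr_complex_gaussian_add[OF \<open>a > 0\<close> \<open>b > 0\<close>] by simp
qed

lemma emeasure_complex_gaussian_norm_sq_greater:
  assumes v: "v > 0" and t: "t \<ge> 0"
  shows "emeasure (complex_gaussian v) {z. t < (cmod z)\<^sup>2} = ennreal (exp (- t / v))"
proof -
  define G where "G x y = ennreal (exp (- (x\<^sup>2 + y\<^sup>2) / v) / (pi * v)) * indicator {y. t < x\<^sup>2 + y\<^sup>2} y"
    for x y :: real
  have [measurable]: "case_prod G \<in> borel_measurable (borel \<Otimes>\<^sub>M borel)"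
  proof -
    have "case_prod G = (\<lambda>p. ennreal (exp (- ((fst p)\<^sup>2 + (snd p)\<^sup>2) / v) / (pi * v)) *
        indicator {p. t < (fst p)\<^sup>2 + (snd p)\<^sup>2} p)"
      by (auto simp: G_def fun_eq_iff split: split_indicator)
    then show ?thesis
      by simp
  qed
  \<comment> \<open>after the substitution y = x s the region t < x^2 + y^2 becomes t / (1 + s^2) < x^2\<close>
  have slice: "(\<integral>\<^sup>+x. ennreal \<bar>x\<bar> * G x (x * s) \<partial>lborel) =
      ennreal (exp (- t / v) / pi) * ennreal (1 / (1 + s\<^sup>2))" for s
  proof -
    have s: "1 + s\<^sup>2 > 0"
      by (simp add: add_pos_nonneg)
    have "ennreal \<bar>x\<bar> * G x (x * s) = ennreal (1 / (pi * v)) *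
        (ennreal (\<bar>x\<bar> * exp (- ((1 + s\<^sup>2) / v) * x\<^sup>2)) * indicator {x. t / (1 + s\<^sup>2) < x\<^sup>2} x)" for x
    proof -
      have "t < x\<^sup>2 + (x * s)\<^sup>2 \<longleftrightarrow> t / (1 + s\<^sup>2) < x\<^sup>2"
        using s by (simp add: pos_divide_less_eq power_mult_distrib algebra_simps)
      moreover have "\<bar>x\<bar> * (exp (- (x\<^sup>2 + (x * s)\<^sup>2) / v) / (pi * v)) =
          1 / (pi * v) * (\<bar>x\<bar> * exp (- ((1 + s\<^sup>2) / v) * x\<^sup>2))"
        by (simp add: power_mult_distrib algebra_simps minus_divide_left)
      ultimately show ?thesis
        using v by (simp add: G_def ennreal_mult'[symmetric] mult.assoc[symmetric] split: split_indicator)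
    qed
    then have "(\<integral>\<^sup>+x. ennreal \<bar>x\<bar> * G x (x * s) \<partial>lborel) =
        (\<integral>\<^sup>+x. ennreal (1 / (pi * v)) * (ennreal (\<bar>x\<bar> * exp (- ((1 + s\<^sup>2) / v) * x\<^sup>2)) *
          indicator {x. t / (1 + s\<^sup>2) < x\<^sup>2} x) \<partial>lborel)"
      by (simp only:)
    also have "\<dots> = ennreal (1 / (pi * v)) * (\<integral>\<^sup>+x. ennreal (\<bar>x\<bar> * exp (- ((1 + s\<^sup>2) / v) * x\<^sup>2)) *
          indicator {x. t / (1 + s\<^sup>2) < x\<^sup>2} x \<partial>lborel)"
      by (rule nn_integral_cmult) measurable
    also have "\<dots> = ennreal (1 / (pi * v)) *
        ennreal (exp (- ((1 + s\<^sup>2) / v) * (t / (1 + s\<^sup>2))) / ((1 + s\<^sup>2) / v))"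
      using s v t by (subst nn_integral_lborel_abs_mult_gaussian_tail) auto
    also have "- ((1 + s\<^sup>2) / v) * (t / (1 + s\<^sup>2)) = - t / v"
      using s by simp
    also have "ennreal (1 / (pi * v)) * ennreal (exp (- t / v) / ((1 + s\<^sup>2) / v)) =
        ennreal (exp (- t / v) / pi) * ennreal (1 / (1 + s\<^sup>2))"
      using s v by (simp add: ennreal_mult[symmetric] field_simps)
    finally show ?thesis .
  qed
  have "emeasure (complex_gaussian v) {z. t < (cmod z)\<^sup>2} =
      (\<integral>\<^sup>+z. indicator {z. t < (cmod z)\<^sup>2} z \<partial>complex_gaussian v)"
    by simp
  also have "\<dots> = (\<integral>\<^sup>+x. \<integral>\<^sup>+y. ennreal (cgauss_part_density v x * cgauss_part_density v y) *
      indicator {z. t < (cmod z)\<^sup>2} (Complex x y) \<partial>lborel \<partial>lborel)"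
    using v by (intro nn_integral_complex_gaussian) auto
  also have "\<dots> = (\<integral>\<^sup>+x. \<integral>\<^sup>+y. G x y \<partial>lborel \<partial>lborel)"
  proof (intro nn_integral_cong)
    fix x y :: real
    have "cgauss_part_density v x * cgauss_part_density v y = exp (- (x\<^sup>2 + y\<^sup>2) / v) / (pi * v)"
      using v by (simp add: cgauss_part_density_eq exp_add[symmetric] diff_divide_distrib add_divide_distrib)
    then show "ennreal (cgauss_part_density v x * cgauss_part_density v y) *
        indicator {z. t < (cmod z)\<^sup>2} (Complex x y) = G x y"
      by (simp add: G_def cmod_power2 split: split_indicator)
  qed
  also have "\<dots> = (\<integral>\<^sup>+s. \<integral>\<^sup>+x. ennreal \<bar>x\<bar> * G x (x * s) \<partial>lborel \<partial>lborel)"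
    by (rule nn_integral_lborel_slope_subst) measurable
  also have "\<dots> = ennreal (exp (- t / v) / pi) * ennreal pi"
    by (simp add: slice nn_integral_cmult nn_integral_lborel_inverse_one_plus_square)
  also have "\<dots> = ennreal (exp (- t / v))"
    by (simp add: ennreal_mult[symmetric])
  finally show ?thesis .
qed

lemma prob_space_cgauss_vec: "s > 0 \<Longrightarrow> prob_space (cgauss_vec L s)"
  unfolding cgauss_vec_def by (intro prob_space_PiM prob_space_complex_gaussian)

lemma sets_cgauss_vec[measurable_cong]: "sets (cgauss_vec L s) = sets (PiM {1..L} (\<lambda>_. borel))"
  unfolding cgauss_vec_def by (intro sets_PiM_cong) auto

lemma space_cgauss_vec: "space (cgauss_vec L s) = space (PiM {1..L} (\<lambda>_. borel))"
  by (rule sets_eq_imp_space_eq) (rule sets_cgauss_vec)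

lemma distr_cgauss_vec_component:
  assumes "s > 0" "i \<in> {1..L}"
  shows "distr (cgauss_vec L s) borel (\<lambda>z. z i) = complex_gaussian s"
proof -
  have "distr (cgauss_vec L s) borel (\<lambda>z. z i) = distr (cgauss_vec L s) (complex_gaussian s) (\<lambda>z. z i)"
    by (rule distr_cong) auto
  also have "\<dots> = complex_gaussian s"
    unfolding cgauss_vec_def using assms by (intro distr_PiM_component prob_space_complex_gaussian) auto
  finally show ?thesis .
qed

lemma indep_vars_cgauss_vec_components:
  assumes s: "s > 0" and "L \<ge> 1"
  shows "prob_space.indep_vars (cgauss_vec L s) (\<lambda>_. borel) (\<lambda>i z. z i) {1..L}"
proof -
  interpret prob_space "cgauss_vec L s"
    by (rule prob_space_cgauss_vec[OF s])
  have "distr (cgauss_vec L s) (PiM {1..L} (\<lambda>_. borel)) (\<lambda>z. \<lambda>i\<in>{1..L}. z i) =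
      distr (cgauss_vec L s) (cgauss_vec L s) (\<lambda>z. z)"
    by (rule distr_cong) (auto simp: sets_cgauss_vec space_cgauss_vec space_PiM PiE_def extensional_def)
  also have "\<dots> = PiM {1..L} (\<lambda>i. distr (cgauss_vec L s) borel (\<lambda>z. z i))"
    using distr_cgauss_vec_component[OF s] unfolding distr_id cgauss_vec_def
    by (intro PiM_cong) auto
  finally show ?thesis
    using \<open>L \<ge> 1\<close> by (subst indep_vars_iff_distr_eq_PiM') auto
qed

(* Only invariance under positive real scaling is available, hence the real positive
   first coefficient. *)
lemma distr_cgauss_vec_partial_sum:
  fixes d :: "nat \<Rightarrow> complex"
  assumes s: "s > 0" and r: "r > 0" and d1: "d 1 = of_real r"
  shows "1 \<le> k \<Longrightarrow> k \<le> L \<Longrightarrow> distr (cgauss_vec L s) borel (\<lambda>z. \<Sum>i\<in>{1..k}. d i * z i) =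
    complex_gaussian (s * (\<Sum>i\<in>{1..k}. (cmod (d i))\<^sup>2))"
proof (induction k rule: nat_induct_at_least)
  case base
  have "distr (cgauss_vec L s) borel (\<lambda>z. \<Sum>i\<in>{1..1}. d i * z i) =
      distr (distr (cgauss_vec L s) borel (\<lambda>z. z 1)) borel (\<lambda>u. of_real r * u)"
    using base d1 by (subst distr_distr) (auto simp: comp_def)
  also have "\<dots> = complex_gaussian (r\<^sup>2 * s)"
    using base by (simp add: distr_cgauss_vec_component[OF s] distr_complex_gaussian_scale[OF s r])
  finally show ?case
    using r d1 by (simp add: mult.commute)
next
  case (Suc k)
  interpret prob_space "cgauss_vec L s"
    by (rule prob_space_cgauss_vec[OF s])
  have "(cmod (d 1))\<^sup>2 \<le> (\<Sum>i\<in>{1..k}. (cmod (d i))\<^sup>2)"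
    using Suc(1) by (intro member_le_sum) auto
  moreover have "(cmod (d 1))\<^sup>2 > 0"
    using r d1 by simp
  ultimately have "(\<Sum>i\<in>{1..k}. (cmod (d i))\<^sup>2) > 0"
    by linarith
  then have pos: "s * (\<Sum>i\<in>{1..k}. (cmod (d i))\<^sup>2) > 0"
    using s by simp
  have "indep_var borel ((\<lambda>f. \<Sum>i\<in>{1..k}. d i * f i) \<circ> (\<lambda>z. restrict z {1..k}))
      borel ((\<lambda>f. f (Suc k)) \<circ> (\<lambda>z. restrict z {Suc k}))"
    using Suc by (intro indep_var_compose[OF indep_var_restrict[OF indep_vars_cgauss_vec_components[OF s]]])
      auto
  then have "indep_var borel (\<lambda>z. \<Sum>i\<in>{1..k}. d i * z i) borel (\<lambda>z. z (Suc k))"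
    by (simp add: comp_def)
  then have "distr (cgauss_vec L s) borel (\<lambda>z. (\<Sum>i\<in>{1..k}. d i * z i) + d (Suc k) * z (Suc k)) =
      complex_gaussian (s * (\<Sum>i\<in>{1..k}. (cmod (d i))\<^sup>2) + (cmod (d (Suc k)))\<^sup>2 * s)"
    using Suc pos s by (intro distr_add_indep_complex_gaussian distr_cgauss_vec_component) auto
  then show ?case
    using Suc by (simp add: algebra_simps)
qed

lemma measure_cgauss_vec_norm_sq_sum_le:
  fixes c :: "nat \<Rightarrow> complex"
  assumes s: "s > 0" and L: "L \<ge> 1" and c1: "c 1 \<noteq> 0" and t: "t \<ge> 0"
  shows "measure (cgauss_vec L s) {z \<in> space (cgauss_vec L s). (cmod (\<Sum>i\<in>{1..L}. c i * z i))\<^sup>2 \<le> t} =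
    1 - exp (- t / (s * (\<Sum>i\<in>{1..L}. (cmod (c i))\<^sup>2)))"
proof -
  define w where "w = s * (\<Sum>i\<in>{1..L}. (cmod (c i))\<^sup>2)"
  define r where "r = cmod (c 1)"
  \<comment> \<open>multiplying by the unit cnj e turns the first coefficient real positive
      without changing the modulus of the sum\<close>
  define e where "e = c 1 / of_real r"
  define d where "d i = cnj e * c i" for i
  have r: "r > 0"
    using c1 by (simp add: r_def)
  have e: "cmod e = 1"
    using r by (simp add: e_def r_def norm_divide)
  have "d 1 = cnj (c 1) * c 1 / of_real r"
    by (simp add: d_def e_def)
  also have "cnj (c 1) * c 1 = of_real (r\<^sup>2)"
    unfolding r_def complex_norm_square by (rule mult.commute)
  finally have d1: "d 1 = of_real r"
    using r by (simp add: power2_eq_square)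
  have sum_d: "(\<Sum>i\<in>{1..L}. d i * z i) = cnj e * (\<Sum>i\<in>{1..L}. c i * z i)" for z
    by (simp add: d_def sum_distrib_left mult.assoc)
  have "(\<Sum>i\<in>{1..L}. (cmod (c i))\<^sup>2) \<ge> (cmod (c 1))\<^sup>2"
    using L by (intro member_le_sum) auto
  moreover have "(cmod (c 1))\<^sup>2 > 0"
    using c1 by simp
  ultimately have w: "w > 0"
    using s unfolding w_def by (intro mult_pos_pos) linarith+
  interpret W: prob_space "complex_gaussian w"
    by (rule prob_space_complex_gaussian[OF w])
  have law: "distr (cgauss_vec L s) borel (\<lambda>z. \<Sum>i\<in>{1..L}. d i * z i) = complex_gaussian w"
    using distr_cgauss_vec_partial_sum[where d=d and k=L and L=L, OF s r d1 L order_refl] e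
    by (simp add: w_def d_def norm_mult)
  have norm_d: "cmod (\<Sum>i\<in>{1..L}. d i * z i) = cmod (\<Sum>i\<in>{1..L}. c i * z i)" for z
    unfolding sum_d norm_mult using e by simp
  have "measure (cgauss_vec L s) {z \<in> space (cgauss_vec L s). (cmod (\<Sum>i\<in>{1..L}. c i * z i))\<^sup>2 \<le> t} =
      measure (cgauss_vec L s) ((\<lambda>z. \<Sum>i\<in>{1..L}. d i * z i) -` {u. (cmod u)\<^sup>2 \<le> t} \<inter> space (cgauss_vec L s))"
    unfolding norm_d[symmetric] by (auto intro!: arg_cong[where f="measure _"])
  also have "\<dots> = measure (complex_gaussian w) {u. (cmod u)\<^sup>2 \<le> t}"
    by (subst law[symmetric], subst measure_distr) auto
  also have "\<dots> = 1 - measure (complex_gaussian w) {u. t < (cmod u)\<^sup>2}"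
    by (subst W.prob_compl[symmetric]) (auto intro!: arg_cong[where f="measure _"])
  also have "measure (complex_gaussian w) {u. t < (cmod u)\<^sup>2} = exp (- t / w)"
    using emeasure_complex_gaussian_norm_sq_greater[OF w t] by (simp add: measure_def)
  finally show ?thesis
    by (simp add: w_def)
qed

lemma measure_cgauss_vec_norm_sq_sum_le_ge:
  fixes c :: "nat \<Rightarrow> complex" and L N :: nat
  assumes s: "s > 0" and L: "L \<ge> 1" "L \<le> N"
    and c: "\<forall>i\<in>{1..L}. cmod (c i) = 1 / sqrt (real N)" and \<alpha>: "\<alpha> > 0"
  shows "measure (cgauss_vec L s) {z \<in> space (cgauss_vec L s). (cmod (\<Sum>i\<in>{1..L}. c i * z i))\<^sup>2 \<le> s * \<alpha>}
     \<ge> 1 - 0.8 * \<alpha> powr (-1/2) * exp (- \<alpha> / 2)"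
proof -
  define \<rho> where "\<rho> = (\<Sum>i\<in>{1..L}. (cmod (c i))\<^sup>2)"
  have N: "N \<ge> 1"
    using L by simp
  have "\<rho> = real L / real N"
    using c N by (simp add: \<rho>_def power_divide)
  then have \<rho>: "\<rho> > 0" "\<rho> \<le> 1"
    using L N by auto
  have "cmod (c 1) = 1 / sqrt (real N)"
    using c L by auto
  then have "c 1 \<noteq> 0"
    using N by auto
  then have "measure (cgauss_vec L s) {z \<in> space (cgauss_vec L s). (cmod (\<Sum>i\<in>{1..L}. c i * z i))\<^sup>2 \<le> s * \<alpha>} =
      1 - exp (- (s * \<alpha>) / (s * \<rho>))"
    unfolding \<rho>_def using s L \<alpha> by (intro measure_cgauss_vec_norm_sq_sum_le) auto
  moreover have "exp (- (s * \<alpha>) / (s * \<rho>)) \<le> exp (- \<alpha>)"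
    using s \<alpha> \<rho> by (simp add: le_divide_eq mult_left_le)
  moreover have "exp (- \<alpha>) = exp (- \<alpha> / 2) * exp (- \<alpha> / 2)"
    by (simp add: exp_add[symmetric])
  moreover have "exp (- \<alpha> / 2) \<le> 0.8 * \<alpha> powr (-1/2)"
    using sqrt_mult_exp_neg_half_le[of \<alpha>] \<alpha>
    by (simp add: powr_minus powr_half_sqrt divide_simps mult.commute)
  ultimately show ?thesis
    by (smt (verit) exp_gt_zero mult_right_mono)
qed

theorem lemma4:
  fixes P NRF N M n :: nat
    and fc B \<sigma>2 \<alpha> :: real
    and A :: "nat \<Rightarrow> nat \<Rightarrow> complex"
    and Xi :: "nat \<Rightarrow> nat"
    and \<Omega> :: "'w measure"
    and Nz :: "'w \<Rightarrow> nat \<Rightarrow> nat \<Rightarrow> complex"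
  assumes "P > 0" "NRF > 0" "N > 0" "M > 0" "NRF * P \<le> N"
    and "fc > 0" "B > 0"
    and "\<forall>i\<in>{1..NRF * P}. \<forall>j\<in>{1..N}. cmod (A i j) = 1 / sqrt (real N)"
    and "n \<in> {1..N}"
    and "is_beam_split_pattern fc B M N n Xi"
    and "\<sigma>2 > 0"
    and "prob_space \<Omega>"
    and "prob_space.indep_vars \<Omega> (\<lambda>_. PiM {1..NRF * P} (\<lambda>_. (borel :: complex measure)))
           (\<lambda>m \<omega>. \<lambda>i\<in>{1..NRF * P}. Nz \<omega> i m) {1..M}"
    and "\<forall>m\<in>{1..M}. distr \<Omega> (PiM {1..NRF * P} (\<lambda>_. borel))
           (\<lambda>\<omega>. \<lambda>i\<in>{1..NRF * P}. Nz \<omega> i m) = cgauss_vec (NRF * P) \<sigma>2"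
    and "\<alpha> > 0" "0.8 * \<alpha> powr (-1/2) * exp (-\<alpha>/2) \<le> 1"
  shows "measure \<Omega> {\<omega> \<in> space \<Omega>. \<forall>m\<in>{1..M}.
            (cmod (\<Sum>i\<in>{1..NRF * P}. cnj (A i (Xi m)) * Nz \<omega> i m))\<^sup>2 \<le> \<sigma>2 * \<alpha>}
         \<ge> (1 - 0.8 * \<alpha> powr (-1/2) * exp (-\<alpha>/2)) ^ M"
proof -
  interpret prob_space \<Omega>
    by (rule assms(12))
  define L where "L = NRF * P"
  let ?Y = "\<lambda>m \<omega>. \<lambda>i\<in>{1..L}. Nz \<omega> i m"
  let ?B = "\<lambda>m. {z \<in> space (PiM {1..L} (\<lambda>_. borel)).
    (cmod (\<Sum>i\<in>{1..L}. cnj (A i (Xi m)) * z i))\<^sup>2 \<le> \<sigma>2 * \<alpha>}"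
  have indep: "indep_vars (\<lambda>_. PiM {1..L} (\<lambda>_. borel)) ?Y {1..M}"
    using assms(13) by (simp add: L_def)
  have events: "?B m \<in> sets (PiM {1..L} (\<lambda>_. borel))" for m
    by measurable
  have "measure (distr \<Omega> (PiM {1..L} (\<lambda>_. borel)) (?Y m)) (?B m) \<ge> 1 - 0.8 * \<alpha> powr (-1/2) * exp (-\<alpha>/2)"
    if m: "m \<in> {1..M}" for m
  proof -
    \<comment> \<open>this is all that is used of the beam split pattern\<close>
    have "Xi m \<in> {1..N}"
      using assms(10) m unfolding is_beam_split_pattern_def by auto
    then have "\<forall>i\<in>{1..L}. cmod (cnj (A i (Xi m))) = 1 / sqrt (real N)"
      using assms(8) by (simp add: L_def)
    moreover have "1 \<le> L" "L \<le> N"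
      using assms(1,2,5) by (simp_all add: L_def)
    moreover have "distr \<Omega> (PiM {1..L} (\<lambda>_. borel)) (?Y m) = cgauss_vec L \<sigma>2"
      using assms(14) m by (simp add: L_def)
    ultimately show ?thesis
      using measure_cgauss_vec_norm_sq_sum_le_ge[OF assms(11) _ _ _ assms(15)]
      by (simp add: space_cgauss_vec)
  qed
  then have "prob {\<omega> \<in> space \<Omega>. \<forall>m\<in>{1..M}. ?Y m \<omega> \<in> ?B m} \<ge>
      (1 - 0.8 * \<alpha> powr (-1/2) * exp (-\<alpha>/2)) ^ card {1..M}"
    using assms(16) by (intro prob_indep_vars_all_in_ge[OF indep _ events]) auto
  moreover have "?Y m \<omega> \<in> ?B m \<longleftrightarrow> (cmod (\<Sum>i\<in>{1..L}. cnj (A i (Xi m)) * Nz \<omega> i m))\<^sup>2 \<le> \<sigma>2 * \<alpha>"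
    for m \<omega>
  proof -
    have "(\<Sum>i\<in>{1..L}. cnj (A i (Xi m)) * ?Y m \<omega> i) = (\<Sum>i\<in>{1..L}. cnj (A i (Xi m)) * Nz \<omega> i m)"
      by (rule sum.cong) auto
    then show ?thesis
      by (simp add: space_PiM)
  qed
  ultimately show ?thesis
    by (simp only: L_def card_atLeastAtMost diff_Suc_1)
qed

end
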